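(* Let $\phi:\mathcal M_1\to\mathcal M_2$ be a homomorphism of local Moufang sets, with $\mathcal M_1=(X,(U_x))$, and let $\theta_x:U_x\to V_{x\phi}$ ($x\in X$) be the induced group homomorphisms. The following are equivalent: (i) $\phi$ is surjective; (ii) $\theta_x$ is surjective for all $x\in X$; (iii) $\theta_x$ is surjective for some $x\in X$.
   Context: Group actions are right actions; maps are composed left to right, so $u\phi$ means first $u$ then $\phi$. For $(X,\sim)$, $\overline x$ is the class of $x$, $\overline X$ the set of classes, $\mathrm{Sym}(X,\sim)$ the bijections $g$ with $x\sim y\iff xg\sim yg$, $\overline U$ the induced group on $\overline X$. A local Moufang set is $(X,\sim)$ with $|\overline X|>2$ and subgroups $U_x\le\mathrm{Sym}(X,\sim)$ ($x\in X$) with: (LM0) $x\sim y\Rightarrow\overline{U_x}=\overline{U_y}$; (LM1) $U_x$ fixes $x$ and is sharply transitive on $X\setminus\overline x$; (LM1') $\overline{U_x}$ fixes $\overline x$ and is sharply transitive on $\overline X\setminus\{\overline x\}$; (LM2) $U_x^g=U_{xg}$ for all $x$ and all $g\in\langle U_y\rangle$, where $g^h=h^{-1}gh$. A homomorphism $\mathcal M_1=(X,(U_x))\to\mathcal M_2=(Y,(V_y))$ is a map $\phi:X\to Y$ such that $x\sim x'\iff x\phi\sim x'\phi$ for all $x,x'\in X$, and $U_x\phi\subseteq\phi V_{x\phi}$ for all $x$. For each $x\in X$ the induced map $\theta_x:U_x\to V_{x\phi}$ is the unique map with $u\phi=\phi\,\theta_x(u)$ for all $u\in U_x$ (it exists and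 is a group homomorphism). *)

theory Defs
  imports "HOL-Algebra.Algebra"
begin

text \<open>Group elements are permutations of the carrier A, represented (as in
  HOL-Algebra's BijGroup) by extensional bijections A -> A.  The right action
  x g of the paper is the function application g x.  The multiplication of
  BijGroup is composition g o f (first f, then g); conjugation
  U^g = g^-1 U g (first g^-1, then u, then g) is therefore
  g \<otimes> u \<otimes> inv g in BijGroup.\<close>

definition Sym_equiv :: "'a set \<Rightarrow> ('a \<times> 'a) set \<Rightarrow> ('a \<Rightarrow> 'a) set" where
  "Sym_equiv A R = {g \<in> Bij A. \<forall>x\<in>A. \<forall>y\<in>A. (x, y) \<in> R \<longleftrightarrow> (g x, g y) \<in> R}"

definition induced_perm :: "'a set \<Rightarrow> ('a \<times> 'a) set \<Rightarrow> ('a \<Rightarrow> 'a) \<Rightarrow> ('a set \<Rightarrow> 'a set)" where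
  "induced_perm A R g = (\<lambda>C \<in> A // R. g ` C)"

definition conj_set :: "'a set \<Rightarrow> ('a \<Rightarrow> 'a) \<Rightarrow> ('a \<Rightarrow> 'a) set \<Rightarrow> ('a \<Rightarrow> 'a) set" where
  "conj_set A g U = {g \<otimes>\<^bsub>BijGroup A\<^esub> u \<otimes>\<^bsub>BijGroup A\<^esub> inv\<^bsub>BijGroup A\<^esub> g | u. u \<in> U}"

definition local_moufang_set ::
  "'a set \<Rightarrow> ('a \<times> 'a) set \<Rightarrow> ('a \<Rightarrow> ('a \<Rightarrow> 'a) set) \<Rightarrow> bool" where
  "local_moufang_set A R U \<longleftrightarrow>
     equiv A R \<and>
     (infinite (A // R) \<or> card (A // R) > 2) \<and>
     (\<forall>x\<in>A. subgroup (U x) (BijGroup A) \<and> U x \<subseteq> Sym_equiv A R) \<and>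
     \<comment> \<open>(LM0)\<close>
     (\<forall>x\<in>A. \<forall>y\<in>A. (x, y) \<in> R \<longrightarrow> induced_perm A R ` U x = induced_perm A R ` U y) \<and>
     \<comment> \<open>(LM1)\<close>
     (\<forall>x\<in>A. (\<forall>u\<in>U x. u x = x) \<and>
        (\<forall>y\<in>A - R``{x}. \<forall>z\<in>A - R``{x}. \<exists>!u. u \<in> U x \<and> u y = z)) \<and>
     \<comment> \<open>(LM1')\<close>
     (\<forall>x\<in>A. (\<forall>h\<in>induced_perm A R ` U x. h (R``{x}) = R``{x}) \<and>
        (\<forall>C\<in>A // R - {R``{x}}. \<forall>D\<in>A // R - {R``{x}}.
            \<exists>!h. h \<in> induced_perm A R ` U x \<and> h C = D)) \<and>
     \<comment> \<open>(LM2)\<close>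
     (\<forall>x\<in>A. \<forall>g\<in>generate (BijGroup A) (\<Union>y\<in>A. U y). conj_set A g (U x) = U (g x))"

text \<open>Homomorphism: phi A -> B preserving and reflecting the equivalence,
  with U_x phi \<subseteq> phi V_{x phi}, i.e. for each u there is v with
  phi(u z) = v(phi z) for all z in A.\<close>
definition lms_hom ::
  "'a set \<Rightarrow> ('a \<times> 'a) set \<Rightarrow> ('a \<Rightarrow> ('a \<Rightarrow> 'a) set) \<Rightarrow>
   'b set \<Rightarrow> ('b \<times> 'b) set \<Rightarrow> ('b \<Rightarrow> ('b \<Rightarrow> 'b) set) \<Rightarrow> ('a \<Rightarrow> 'b) \<Rightarrow> bool" where
  "lms_hom A R U B S V \<phi> \<longleftrightarrow>
     \<phi> \<in> A \<rightarrow> B \<and>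
     (\<forall>x\<in>A. \<forall>x'\<in>A. (x, x') \<in> R \<longleftrightarrow> (\<phi> x, \<phi> x') \<in> S) \<and>
     (\<forall>x\<in>A. \<forall>u\<in>U x. \<exists>v\<in>V (\<phi> x). \<forall>z\<in>A. \<phi> (u z) = v (\<phi> z))"

definition induced_hom ::
  "'a set \<Rightarrow> ('b \<Rightarrow> ('b \<Rightarrow> 'b) set) \<Rightarrow> ('a \<Rightarrow> 'b) \<Rightarrow> 'a \<Rightarrow> ('a \<Rightarrow> 'a) \<Rightarrow> ('b \<Rightarrow> 'b)" where
  "induced_hom A V \<phi> x u = (THE v. v \<in> V (\<phi> x) \<and> (\<forall>z\<in>A. \<phi> (u z) = v (\<phi> z)))"

end

theory Submission
  imports Defs
begin

text \<open>Call two points opposite when they lie in different classes.  For each x, \<theta> x is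
  surjective iff the image of \<phi> contains every point opposite \<phi> x: V (\<phi> x) acts sharply
  transitively on these points, and \<theta> x u maps \<phi> y to \<phi> (u y) for y opposite x.  Once the
  image contains all points opposite \<phi> x, the class of \<phi> x is reached as well, by transporting
  points opposite \<phi> x with \<theta> y u, where y is opposite x and u \<in> U y maps x to a point
  opposite both x and y.\<close>

lemma Sym_equiv_bij_betw: "g \<in> Sym_equiv A R \<Longrightarrow> bij_betw g A A"
  unfolding Sym_equiv_def Bij_def by auto

lemma Sym_equiv_related_iff:
  "g \<in> Sym_equiv A R \<Longrightarrow> x \<in> A \<Longrightarrow> y \<in> A \<Longrightarrow> (g x, g y) \<in> R \<longleftrightarrow> (x, y) \<in> R"
  unfolding Sym_equiv_def by blast

lemma local_moufang_setD:
  assumes "local_moufang_set A R U"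
  shows "equiv A R" and "infinite (A // R) \<or> card (A // R) > 2"
    and "\<forall>x\<in>A. subgroup (U x) (BijGroup A) \<and> U x \<subseteq> Sym_equiv A R"
    and "\<forall>x\<in>A. (\<forall>u\<in>U x. u x = x) \<and>
        (\<forall>y\<in>A - R``{x}. \<forall>z\<in>A - R``{x}. \<exists>!u. u \<in> U x \<and> u y = z)"
  by (insert assms[unfolded local_moufang_set_def], elim conjE, assumption)+

lemma local_moufang_set_root_Sym_equiv:
  "local_moufang_set A R U \<Longrightarrow> x \<in> A \<Longrightarrow> u \<in> U x \<Longrightarrow> u \<in> Sym_equiv A R"
  using local_moufang_setD(3) by blast

lemma local_moufang_set_root_fixes:
  "local_moufang_set A R U \<Longrightarrow> x \<in> A \<Longrightarrow> u \<in> U x \<Longrightarrow> u x = x"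
  using local_moufang_setD(4) by blast

lemma local_moufang_set_root_sharply_transitive:
  assumes "local_moufang_set A R U" "x \<in> A" "y \<in> A" "z \<in> A" "(x, y) \<notin> R" "(x, z) \<notin> R"
  shows "\<exists>!u. u \<in> U x \<and> u y = z"
  using local_moufang_setD(4)[OF assms(1)] assms(2-6) by blast

lemma local_moufang_set_root_exists:
  assumes "local_moufang_set A R U" "x \<in> A" "y \<in> A" "z \<in> A" "(x, y) \<notin> R" "(x, z) \<notin> R"
  obtains u where "u \<in> U x" "u y = z"
  using local_moufang_set_root_sharply_transitive[OF assms] by blast

lemma local_moufang_set_root_maps_into:
  assumes "local_moufang_set A R U" "x \<in> A" "u \<in> U x" "y \<in> A"
  shows "u y \<in> A"
  using bij_betwE[OF Sym_equiv_bij_betw[OF local_moufang_set_root_Sym_equiv[OF assms(1-3)]]]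
    assms(4) by blast

lemma local_moufang_set_root_opposite_iff:
  assumes "local_moufang_set A R U" "x \<in> A" "u \<in> U x" "y \<in> A"
  shows "(x, u y) \<in> R \<longleftrightarrow> (x, y) \<in> R"
  using Sym_equiv_related_iff[OF local_moufang_set_root_Sym_equiv[OF assms(1-3)] assms(2,4)]
    local_moufang_set_root_fixes[OF assms(1-3)] by simp

lemma local_moufang_set_root_eqI:
  assumes "local_moufang_set A R U" "x \<in> A" "y \<in> A" "(x, y) \<notin> R"
    and "u \<in> U x" "u' \<in> U x" "u y = u' y"
  shows "u = u'"
proof -
  have "u y \<in> A" "(x, u y) \<notin> R"
    using local_moufang_set_root_maps_into[OF assms(1,2,5,3)]
      local_moufang_set_root_opposite_iff[OF assms(1,2,5,3)] assms(4) by simp_all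
  then have "\<exists>!w. w \<in> U x \<and> w y = u y"
    using local_moufang_set_root_sharply_transitive[OF assms(1-3) _ assms(4)] by blast
  then show ?thesis using the1_equality assms(5-7) by metis
qed

lemma local_moufang_set_exists_opposite:
  assumes "local_moufang_set A R U" "x \<in> A" "y \<in> A"
  obtains z where "z \<in> A" "(x, z) \<notin> R" "(y, z) \<notin> R"
proof -
  have eq: "equiv A R" and big: "infinite (A // R) \<or> card (A // R) > 2"
    using local_moufang_setD(1,2)[OF assms(1)] .
  have "\<not> A // R \<subseteq> {R``{x}, R``{y}}"
  proof
    assume sub: "A // R \<subseteq> {R``{x}, R``{y}}"
    then have fin: "finite (A // R)" by (rule finite_subset) simp
    have "card (A // R) \<le> card {R``{x}, R``{y}}" using card_mono[OF _ sub] by simp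
    also have "\<dots> \<le> 2" by (simp add: card_insert_if)
    finally show False using big fin by simp
  qed
  then obtain C where C: "C \<in> A // R" "C \<noteq> R``{x}" "C \<noteq> R``{y}" by blast
  from C(1) obtain z where z: "z \<in> A" "C = R``{z}" by (rule quotientE)
  have "(x, z) \<notin> R" using C(2) z(2) equiv_class_eq[OF eq, of x z] by auto
  moreover have "(y, z) \<notin> R" using C(3) z(2) equiv_class_eq[OF eq, of y z] by auto
  ultimately show thesis using z(1) that by blast
qed

lemma local_moufang_set_nonempty: "local_moufang_set A R U \<Longrightarrow> A \<noteq> {}"
  using local_moufang_setD(2) by fastforce

lemma lms_hom_maps_into: "lms_hom A R U B S V \<phi> \<Longrightarrow> x \<in> A \<Longrightarrow> \<phi> x \<in> B"
  unfolding lms_hom_def by blast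

lemma lms_hom_related_iff:
  "lms_hom A R U B S V \<phi> \<Longrightarrow> x \<in> A \<Longrightarrow> y \<in> A \<Longrightarrow> (\<phi> x, \<phi> y) \<in> S \<longleftrightarrow> (x, y) \<in> R"
  unfolding lms_hom_def by blast

lemma induced_hom_intertwines:
  assumes "local_moufang_set A R U" "local_moufang_set B S V" "lms_hom A R U B S V \<phi>"
    and "x \<in> A" "u \<in> U x"
  shows "induced_hom A V \<phi> x u \<in> V (\<phi> x)"
    and "\<And>z. z \<in> A \<Longrightarrow> \<phi> (u z) = induced_hom A V \<phi> x u (\<phi> z)"
proof -
  obtain v where v: "v \<in> V (\<phi> x)" "\<forall>z\<in>A. \<phi> (u z) = v (\<phi> z)"
    using assms(3-5) unfolding lms_hom_def by blast
  obtain y where y: "y \<in> A" "(x, y) \<notin> R"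
    using local_moufang_set_exists_opposite[OF assms(1,4,4)] by blast
  have "\<exists>!v. v \<in> V (\<phi> x) \<and> (\<forall>z\<in>A. \<phi> (u z) = v (\<phi> z))"
  proof (rule ex1I[of _ v])
    fix w assume w: "w \<in> V (\<phi> x) \<and> (\<forall>z\<in>A. \<phi> (u z) = w (\<phi> z))"
    have "(\<phi> x, \<phi> y) \<notin> S" using lms_hom_related_iff[OF assms(3,4) y(1)] y(2) by simp
    moreover have "w (\<phi> y) = v (\<phi> y)" using w v(2) y(1) by metis
    ultimately show "w = v"
      using local_moufang_set_root_eqI[OF assms(2) lms_hom_maps_into[OF assms(3,4)]
          lms_hom_maps_into[OF assms(3) y(1)]] w v(1) by blast
  qed (use v in blast)
  then have "induced_hom A V \<phi> x u \<in> V (\<phi> x) \<and>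
      (\<forall>z\<in>A. \<phi> (u z) = induced_hom A V \<phi> x u (\<phi> z))"
    unfolding induced_hom_def by (rule theI')
  then show "induced_hom A V \<phi> x u \<in> V (\<phi> x)"
    and "\<And>z. z \<in> A \<Longrightarrow> \<phi> (u z) = induced_hom A V \<phi> x u (\<phi> z)" by blast+
qed

lemma induced_hom_surj_iff_opposite_in_image:
  assumes A: "local_moufang_set A R U" and B: "local_moufang_set B S V"
    and h: "lms_hom A R U B S V \<phi>" and x: "x \<in> A"
  shows "induced_hom A V \<phi> x ` U x = V (\<phi> x) \<longleftrightarrow> B - S``{\<phi> x} \<subseteq> \<phi> ` A"
proof -
  let ?\<theta> = "induced_hom A V \<phi> x"
  note \<theta> = induced_hom_intertwines[OF A B h x]
  note \<phi>B = lms_hom_maps_into[OF h]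
  obtain y where y: "y \<in> A" "(x, y) \<notin> R"
    using local_moufang_set_exists_opposite[OF A x x] by metis
  have \<phi>y: "(\<phi> x, \<phi> y) \<notin> S" using lms_hom_related_iff[OF h x y(1)] y(2) by simp
  show ?thesis
  proof
    assume surj: "?\<theta> ` U x = V (\<phi> x)"
    show "B - S``{\<phi> x} \<subseteq> \<phi> ` A"
    proof
      fix b assume "b \<in> B - S``{\<phi> x}"
      then have b: "b \<in> B" "(\<phi> x, b) \<notin> S" by auto
      obtain v where v: "v \<in> V (\<phi> x)" "v (\<phi> y) = b"
        using local_moufang_set_root_exists[OF B \<phi>B[OF x] \<phi>B[OF y(1)] b(1) \<phi>y b(2)] .
      from v(1) surj obtain u where u: "u \<in> U x" "?\<theta> u = v" by (metis imageE)
      have "b = \<phi> (u y)" using \<theta>(2)[OF u(1) y(1)] u(2) v(2) by simp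
      then show "b \<in> \<phi> ` A" using local_moufang_set_root_maps_into[OF A x u(1) y(1)] by blast
    qed
  next
    assume opp: "B - S``{\<phi> x} \<subseteq> \<phi> ` A"
    show "?\<theta> ` U x = V (\<phi> x)"
    proof
      show "V (\<phi> x) \<subseteq> ?\<theta> ` U x"
      proof
        fix v assume v: "v \<in> V (\<phi> x)"
        have vy: "v (\<phi> y) \<in> B" "(\<phi> x, v (\<phi> y)) \<notin> S"
          using local_moufang_set_root_maps_into[OF B \<phi>B[OF x] v \<phi>B[OF y(1)]]
            local_moufang_set_root_opposite_iff[OF B \<phi>B[OF x] v \<phi>B[OF y(1)]] \<phi>y by simp_all
        with opp have "v (\<phi> y) \<in> \<phi> ` A" by blast
        then obtain z where z: "z \<in> A" "\<phi> z = v (\<phi> y)" by (metis imageE)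
        have "(x, z) \<notin> R" using vy(2) z lms_hom_related_iff[OF h x z(1)] by simp
        obtain u where u: "u \<in> U x" "u y = z"
          using local_moufang_set_root_exists[OF A x y(1) z(1) y(2) \<open>(x, z) \<notin> R\<close>] .
        have "?\<theta> u = v"
          by (rule local_moufang_set_root_eqI[OF B \<phi>B[OF x] \<phi>B[OF y(1)] \<phi>y \<theta>(1)[OF u(1)] v])
            (use \<theta>(2)[OF u(1) y(1)] u(2) z(2) in simp)
        with u(1) show "v \<in> ?\<theta> ` U x" by blast
      qed
    qed (use \<theta>(1) in auto)
  qed
qed

lemma lms_hom_class_in_image_if_opposite_in_image:
  assumes A: "local_moufang_set A R U" and B: "local_moufang_set B S V"
    and h: "lms_hom A R U B S V \<phi>" and x: "x \<in> A"
    and opp: "B - S``{\<phi> x} \<subseteq> \<phi> ` A"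
    and b: "b \<in> B" "(\<phi> x, b) \<in> S"
  shows "b \<in> \<phi> ` A"
proof -
  note \<phi>B = lms_hom_maps_into[OF h]
  obtain y where y: "y \<in> A" "(x, y) \<notin> R"
    using local_moufang_set_exists_opposite[OF A x x] by metis
  obtain z where z: "z \<in> A" "(x, z) \<notin> R" "(y, z) \<notin> R"
    using local_moufang_set_exists_opposite[OF A x y(1)] by metis
  have "(y, x) \<notin> R" using y(2) local_moufang_setD(1)[OF A] by (meson equivE symD)
  then obtain u where u: "u \<in> U y" "u x = z"
    using local_moufang_set_root_exists[OF A y(1) x z(1) _ z(3)] by metis
  define w where "w = induced_hom A V \<phi> y u"
  note w = induced_hom_intertwines[OF A B h y(1) u(1), folded w_def]
  have wS: "w \<in> Sym_equiv B S"
    using local_moufang_set_root_Sym_equiv[OF B \<phi>B[OF y(1)] w(1)] .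
  from b(1) have "b \<in> w ` B" by (simp add: bij_betw_imp_surj_on[OF Sym_equiv_bij_betw[OF wS]])
  then obtain c where c: "c \<in> B" "w c = b" by (metis imageE)
  txt \<open>w maps the class of \<phi> x, which contains b, onto the class of \<phi> z, which does not.\<close>
  have "(\<phi> x, c) \<notin> S"
  proof
    assume "(\<phi> x, c) \<in> S"
    then have "(w (\<phi> x), b) \<in> S"
      using Sym_equiv_related_iff[OF wS \<phi>B[OF x] c(1)] c(2) by simp
    moreover have "w (\<phi> x) = \<phi> z" using w(2)[OF x] u(2) by simp
    ultimately have "(\<phi> z, b) \<in> S" by simp
    with b(2) have "(\<phi> x, \<phi> z) \<in> S"
      using local_moufang_setD(1)[OF B] by (meson equivE symD transD)
    with z(2) show False using lms_hom_related_iff[OF h x z(1)] by simp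
  qed
  with c(1) opp have "c \<in> \<phi> ` A" by blast
  then obtain a where a: "a \<in> A" "c = \<phi> a" by (rule imageE)
  have "b = \<phi> (u a)" using w(2)[OF a(1)] a(2) c(2) by simp
  then show ?thesis using local_moufang_set_root_maps_into[OF A y(1) u(1) a(1)] by blast
qed

lemma lms_hom_surj_if_opposite_in_image:
  assumes A: "local_moufang_set A R U" and B: "local_moufang_set B S V"
    and h: "lms_hom A R U B S V \<phi>" and x: "x \<in> A"
    and opp: "B - S``{\<phi> x} \<subseteq> \<phi> ` A"
  shows "\<phi> ` A = B"
proof -
  have "b \<in> \<phi> ` A" if b: "b \<in> B" for b
  proof (cases "(\<phi> x, b) \<in> S")
    case True
    with lms_hom_class_in_image_if_opposite_in_image[OF assms b] show ?thesis .
  next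
    case False
    with b opp show ?thesis by blast
  qed
  with lms_hom_maps_into[OF h] show ?thesis by auto
qed

theorem mainTheorem10:
  fixes A :: "'a set" and R :: "('a \<times> 'a) set" and U :: "'a \<Rightarrow> ('a \<Rightarrow> 'a) set"
    and B :: "'b set" and S :: "('b \<times> 'b) set" and V :: "'b \<Rightarrow> ('b \<Rightarrow> 'b) set"
    and \<phi> :: "'a \<Rightarrow> 'b"
  assumes "local_moufang_set A R U" and "local_moufang_set B S V"
    and "lms_hom A R U B S V \<phi>"
  shows "(\<phi> ` A = B \<longleftrightarrow> (\<forall>x\<in>A. induced_hom A V \<phi> x ` U x = V (\<phi> x)))
       \<and> ((\<forall>x\<in>A. induced_hom A V \<phi> x ` U x = V (\<phi> x))
            \<longleftrightarrow> (\<exists>x\<in>A. induced_hom A V \<phi> x ` U x = V (\<phi> x)))"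
proof -
  let ?surj = "\<lambda>x. induced_hom A V \<phi> x ` U x = V (\<phi> x)"
  have surj_iff: "?surj x \<longleftrightarrow> B - S``{\<phi> x} \<subseteq> \<phi> ` A" if "x \<in> A" for x
    using induced_hom_surj_iff_opposite_in_image[OF assms that] .
  have i_ii: "\<forall>x\<in>A. ?surj x" if "\<phi> ` A = B"
    using surj_iff that by simp
  have iii_i: "\<phi> ` A = B" if "x \<in> A" "?surj x" for x
    using lms_hom_surj_if_opposite_in_image[OF assms that(1)] surj_iff[OF that(1)] that(2) by simp
  obtain x0 where "x0 \<in> A" using local_moufang_set_nonempty[OF assms(1)] by blast
  then show ?thesis using i_ii iii_i by metis
qed

end
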